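(* Let $\mathbf L=(L,\vee,\wedge,0,1)$ be a complemented modular lattice with $0\ne1$ and $F$ a filter of $\mathbf L$. Then $F$ is a deductive system of $\mathbf L$.
   Context: For $a\in L$, $a^+:=\{x\in L\mid a\vee x=1,\ a\wedge x=0\}$ (the set of all complements of $a$), and $a\to b:=\{x\vee(a\wedge b)\mid x\in a^+\}$. A deductive system of $\mathbf L$ is a subset $D\subseteq L$ such that $1\in D$, and whenever $a\in D$, $b\in L$ and $a\to b\subseteq D$, then $b\in D$. *)

theory Defs
  imports Main
begin

text \<open>The lattice L is the whole carrier of a type of class bounded_lattice
  (join = sup, meet = inf, 0 = bot, 1 = top).\<close>

definition modular_lattice :: "'a::bounded_lattice itself \<Rightarrow> bool" where
  "modular_lattice _ \<longleftrightarrow> (\<forall>x y z::'a. x \<le> z \<longrightarrow> sup x (inf y z) = inf (sup x y) z)"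

definition complements :: "'a::bounded_lattice \<Rightarrow> 'a set" where
  "complements a = {x. sup a x = top \<and> inf a x = bot}"

definition complemented_lattice :: "'a::bounded_lattice itself \<Rightarrow> bool" where
  "complemented_lattice _ \<longleftrightarrow> (\<forall>a::'a. complements a \<noteq> {})"

definition imp_set :: "'a::bounded_lattice \<Rightarrow> 'a \<Rightarrow> 'a set" where
  "imp_set a b = {sup x (inf a b) | x. x \<in> complements a}"

definition lattice_filter :: "'a::bounded_lattice set \<Rightarrow> bool" where
  "lattice_filter F \<longleftrightarrow> F \<noteq> {}
     \<and> (\<forall>x\<in>F. \<forall>y. x \<le> y \<longrightarrow> y \<in> F)
     \<and> (\<forall>x\<in>F. \<forall>y\<in>F. inf x y \<in> F)"

definition deductive_system :: "'a::bounded_lattice set \<Rightarrow> bool" where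
  "deductive_system D \<longleftrightarrow> top \<in> D
     \<and> (\<forall>a\<in>D. \<forall>b. imp_set a b \<subseteq> D \<longrightarrow> b \<in> D)"

end

theory Submission
  imports Defs
begin

text \<open>Let \<open>a \<in> F\<close> with \<open>a \<rightarrow> b \<subseteq> F\<close>, and pick a complement \<open>x\<close> of \<open>a\<close>. Then
  \<open>x \<squnion> (a \<sqinter> b) \<in> F\<close>, hence \<open>a \<sqinter> (x \<squnion> (a \<sqinter> b)) \<in> F\<close>. Since \<open>a \<sqinter> b \<le> a\<close>, modularity
  rewrites this element as \<open>(a \<sqinter> b) \<squnion> (a \<sqinter> x) = a \<sqinter> b \<le> b\<close>, so \<open>b \<in> F\<close>.\<close>

lemma lattice_filter_top:
  assumes "lattice_filter F"
  shows "top \<in> F"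
  using assms unfolding lattice_filter_def by (meson ex_in_conv top_greatest)

lemma lattice_filter_inf_le:
  assumes "lattice_filter F" and "a \<in> F" and "c \<in> F" and "inf a c \<le> b"
  shows "b \<in> F"
  using assms unfolding lattice_filter_def by blast

lemma modular_inf_sup_disjoint:
  fixes a b x :: "'a::bounded_lattice"
  assumes "modular_lattice TYPE('a)" and "inf a x = bot"
  shows "inf a (sup x (inf a b)) = inf a b"
proof -
  have "inf a (sup x (inf a b)) = inf (sup (inf a b) x) a"
    by (simp add: inf_commute sup_commute)
  also have "\<dots> = sup (inf a b) (inf x a)"
    using assms(1) unfolding modular_lattice_def by (metis inf_le1)
  also have "\<dots> = inf a b"
    using assms(2) by (simp add: inf_commute)
  finally show ?thesis .
qed

theorem proposition7:
  fixes F :: "'a::bounded_lattice set"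
  assumes "modular_lattice TYPE('a)"
    and "complemented_lattice TYPE('a)"
    and "(bot::'a) \<noteq> top"
    and "lattice_filter F"
  shows "deductive_system F"
  unfolding deductive_system_def
proof (intro conjI ballI allI impI)
  show "top \<in> F" using assms(4) by (rule lattice_filter_top)
  fix a b
  assume a: "a \<in> F" and imp: "imp_set a b \<subseteq> F"
  obtain x where x: "x \<in> complements a"
    using assms(2) unfolding complemented_lattice_def by blast
  have "sup x (inf a b) \<in> F"
    using imp x unfolding imp_set_def by blast
  moreover have "inf a (sup x (inf a b)) = inf a b"
    using assms(1) x unfolding complements_def by (simp add: modular_inf_sup_disjoint)
  ultimately show "b \<in> F"
    using lattice_filter_inf_le[OF assms(4) a] by (metis inf_le2)
qed

end
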